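(* Let $f\colon\mathbb{R}^k_+\to\operatorname{int}(\mathbb{R}^k_+)$ be continuous and concave with respect to the cone order, and let $U\subset\operatorname{int}(\mathbb{R}^k_+)$ be a compact set containing a nonempty open set. Then $f$ is a local $c$-Lipschitz contraction with respect to Thompson's metric on $U$; that is, there exists $c\in[0,1)$ such that $d_T(f(x),f(y))\le c\, d_T(x,y)$ for all $x,y\in U$.
   Context: $\mathbb{R}^k_+=\{x\in\mathbb{R}^k: x_i\ge 0\ \forall i\}$, $\operatorname{int}(\mathbb{R}^k_+)$ is the set of vectors with all coordinates strictly positive, and $x\le y$ means $y-x\in\mathbb{R}^k_+$. Concavity with respect to the cone order means $f(tx+(1-t)y)\ge tf(x)+(1-t)f(y)$ for all $x,y\in\mathbb{R}^k_+$, $t\in(0,1)$. Thompson's metric on $\operatorname{int}(\mathbb{R}^k_+)$ is $d_T(x,y)=\ln\big(\max\{M(x,y),M(y,x)\}\big)$ with $M(x,y)=\inf\{\beta>0: x\le\beta y\}$. Compactness and continuity refer to the usual topology of $\mathbb{R}^k$ (for subsets of $\operatorname{int}(\mathbb{R}^k_+)$, compactness in the usual topology coincides with compactness in $(\operatorname{int}(\mathbb{R}^k_+),d_T)$). *)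

theory Defs
  imports "HOL-Analysis.Analysis"
begin

definition nonneg_cone :: "(real^'k) set" where
  "nonneg_cone = {x. \<forall>i. x $ i \<ge> 0}"

definition pos_cone :: "(real^'k) set" where
  "pos_cone = {x. \<forall>i. x $ i > 0}"

definition cone_le :: "real^'k \<Rightarrow> real^'k \<Rightarrow> bool" where
  "cone_le x y \<longleftrightarrow> y - x \<in> nonneg_cone"

definition cone_concave_on :: "(real^'k) set \<Rightarrow> (real^'k \<Rightarrow> real^'k) \<Rightarrow> bool" where
  "cone_concave_on S f \<longleftrightarrow>
     (\<forall>x\<in>S. \<forall>y\<in>S. \<forall>t::real. 0 < t \<and> t < 1 \<longrightarrow>
        cone_le (t *\<^sub>R f x + (1 - t) *\<^sub>R f y) (f (t *\<^sub>R x + (1 - t) *\<^sub>R y)))"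

definition M_T :: "real^'k \<Rightarrow> real^'k \<Rightarrow> real" where
  "M_T x y = Inf {\<beta>. \<beta> > 0 \<and> cone_le x (\<beta> *\<^sub>R y)}"

definition thompson_dist :: "real^'k \<Rightarrow> real^'k \<Rightarrow> real" where
  "thompson_dist x y = ln (max (M_T x y) (M_T y x))"

end

theory Submission
  imports Defs
begin

text \<open>A cone-concave map into the interior of the cone is order-preserving, and concavity on
  the segment from 0 gives \<open>f (t y) \<ge> t f y + (1 - t) f 0\<close>. As \<open>f ` U\<close> is bounded and \<open>f 0\<close>
  is interior, \<open>\<delta> f y \<le> f 0\<close> on \<open>U\<close> for some \<open>\<delta> \<in> (0,1)\<close>. If \<open>d\<^sub>T(x,y) = - ln t\<close>, then
  \<open>t y \<le> x\<close>, hence \<open>f x \<ge> (t + (1 - t) \<delta>) f y\<close>, and symmetrically; by concavity of \<open>ln\<close>,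
  \<open>- ln (t + (1 - t) \<delta>) \<le> (1 - \<delta>) (- ln t)\<close>, so \<open>c = 1 - \<delta>\<close> works.\<close>

lemma cone_le_iff: "cone_le x y \<longleftrightarrow> (\<forall>i. x $ i \<le> y $ i)"
  unfolding cone_le_def nonneg_cone_def by auto

lemma pos_cone_subset_nonneg_cone: "pos_cone \<subseteq> nonneg_cone"
  unfolding pos_cone_def nonneg_cone_def by (auto intro: less_imp_le)

lemma M_T_eq_Max:
  assumes "x \<in> pos_cone" "y \<in> pos_cone"
  shows "M_T x y = Max (range (\<lambda>i. x $ i / y $ i))"
proof -
  define B where "B = Max (range (\<lambda>i. x $ i / y $ i))"
  have y_pos: "\<And>i. y $ i > 0" and x_pos: "\<And>i. x $ i > 0"
    using assms by (auto simp: pos_cone_def)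
  have B_pos: "B > 0"
    unfolding B_def using x_pos y_pos by (subst Max_gr_iff) auto
  have "cone_le x (\<beta> *\<^sub>R y) \<longleftrightarrow> B \<le> \<beta>" for \<beta>
    using y_pos by (simp add: B_def cone_le_iff pos_divide_le_eq mult.commute)
  then have "{\<beta>. \<beta> > 0 \<and> cone_le x (\<beta> *\<^sub>R y)} = {B..}"
    using B_pos by auto
  then show ?thesis
    by (simp add: M_T_def B_def)
qed

lemma M_T_pos:
  assumes "x \<in> pos_cone" "y \<in> pos_cone"
  shows "M_T x y > 0"
  using assms by (simp add: M_T_eq_Max Max_gr_iff pos_cone_def)

lemma thompson_dist_commute: "thompson_dist x y = thompson_dist y x"
  by (simp add: thompson_dist_def max.commute)

lemma cone_le_exp_neg_thompson_dist:
  assumes "x \<in> pos_cone" "y \<in> pos_cone"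
  shows "cone_le (exp (- thompson_dist x y) *\<^sub>R x) y"
proof -
  define m where "m = max (M_T x y) (M_T y x)"
  have m_pos: "m > 0"
    using M_T_pos[OF assms] by (simp add: m_def less_max_iff_disj)
  have "x $ i / y $ i \<le> m" for i
    using assms by (simp add: m_def M_T_eq_Max le_max_iff_disj)
  then have "x $ i / m \<le> y $ i" for i
    using assms m_pos by (simp add: pos_cone_def field_simps)
  moreover have "exp (- thompson_dist x y) = 1 / m"
    using m_pos by (simp add: thompson_dist_def m_def exp_minus divide_inverse)
  ultimately show ?thesis
    by (simp add: cone_le_iff)
qed

lemma thompson_dist_nonneg:
  assumes "x \<in> pos_cone" "y \<in> pos_cone"
  shows "thompson_dist x y \<ge> 0"
proof -
  obtain i :: 'a where True by simp
  have "x $ i / y $ i \<le> M_T x y" "y $ i / x $ i \<le> M_T y x"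
    using assms by (simp_all add: M_T_eq_Max)
  moreover have "x $ i / y $ i \<ge> 1 \<or> y $ i / x $ i \<ge> 1"
    using assms by (auto simp: pos_cone_def)
  ultimately show ?thesis
    unfolding thompson_dist_def by (auto simp: le_max_iff_disj)
qed

lemma thompson_dist_le_minus_ln:
  assumes "x \<in> pos_cone" "y \<in> pos_cone" "g > 0"
    and "cone_le (g *\<^sub>R x) y" "cone_le (g *\<^sub>R y) x"
  shows "thompson_dist x y \<le> - ln g"
proof -
  have ratio_le: "u $ i / v $ i \<le> 1 / g"
    if "u \<in> pos_cone" "v \<in> pos_cone" "cone_le (g *\<^sub>R u) v" for u v :: "real^'a" and i
    using that \<open>g > 0\<close> by (auto simp: cone_le_iff pos_cone_def field_simps)
  have "max (M_T x y) (M_T y x) \<le> 1 / g"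
    using assms by (simp add: M_T_eq_Max ratio_le)
  then have "thompson_dist x y \<le> ln (1 / g)"
    unfolding thompson_dist_def using M_T_pos[OF assms(1,2)] \<open>g > 0\<close>
    by (subst ln_le_cancel_iff) (auto simp: less_max_iff_disj)
  then show ?thesis
    using \<open>g > 0\<close> by (simp add: ln_div)
qed

lemma cone_concave_imp_mono:
  assumes f_nonneg: "f ` nonneg_cone \<subseteq> nonneg_cone"
    and f_conc: "cone_concave_on nonneg_cone f"
    and "x \<in> nonneg_cone" "y \<in> nonneg_cone" "cone_le x y"
  shows "cone_le (f x) (f y)"
  unfolding cone_le_iff
proof
  fix i
  show "f x $ i \<le> f y $ i"
  proof (rule field_le_mult_one_interval)
    fix s :: real assume s: "0 < s" "s < 1"
    \<comment> \<open>y is a convex combination of x and a point z further out along the ray from x through y\<close>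
    define z where "z = x + (1 / (1 - s)) *\<^sub>R (y - x)"
    have z: "z \<in> nonneg_cone"
      using assms(3-5) s by (auto simp: z_def nonneg_cone_def cone_le_def)
    have y_eq: "(1 - s) *\<^sub>R z + (1 - (1 - s)) *\<^sub>R x = y"
      using s by (simp add: z_def algebra_simps)
    have "0 < 1 - s" "1 - s < 1"
      using s by simp_all
    then have "cone_le ((1 - s) *\<^sub>R f z + (1 - (1 - s)) *\<^sub>R f x) (f y)"
      using f_conc z assms(3) unfolding cone_concave_on_def y_eq[symmetric] by blast
    moreover have "f z $ i \<ge> 0"
      using f_nonneg z by (auto simp: nonneg_cone_def)
    ultimately show "s * f x $ i \<le> f y $ i"
      using s by (auto simp: cone_le_iff intro: order_trans[rotated] mult_nonneg_nonneg)
  qed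
qed

lemma cone_concave_lower_bound:
  assumes f_nonneg: "f ` nonneg_cone \<subseteq> nonneg_cone"
    and f_conc: "cone_concave_on nonneg_cone f"
    and x: "x \<in> nonneg_cone" and y: "y \<in> nonneg_cone"
    and t: "0 < t" "t \<le> 1" and ty_le_x: "cone_le (t *\<^sub>R y) x"
    and \<delta>_fy_le: "cone_le (\<delta> *\<^sub>R f y) (f 0)"
  shows "cone_le ((t + (1 - t) * \<delta>) *\<^sub>R f y) (f x)"
proof -
  have zero: "0 \<in> nonneg_cone" and ty: "t *\<^sub>R y \<in> nonneg_cone"
    using y t by (auto simp: nonneg_cone_def)
  have concave_at_0: "cone_le (t *\<^sub>R f y + (1 - t) *\<^sub>R f 0) (f (t *\<^sub>R y))"
  proof (cases "t = 1")
    case False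
    with t have "t < 1" by simp
    with t have "cone_le (t *\<^sub>R f y + (1 - t) *\<^sub>R f 0) (f (t *\<^sub>R y + (1 - t) *\<^sub>R 0))"
      using f_conc y zero unfolding cone_concave_on_def by blast
    then show ?thesis by simp
  qed (simp add: cone_le_iff)
  have mono: "cone_le (f (t *\<^sub>R y)) (f x)"
    using cone_concave_imp_mono[OF f_nonneg f_conc ty x ty_le_x] .
  show ?thesis
    unfolding cone_le_iff
  proof
    fix i
    have "((t + (1 - t) * \<delta>) *\<^sub>R f y) $ i = t * f y $ i + (1 - t) * (\<delta> * f y $ i)"
      by (simp add: algebra_simps)
    also have "\<dots> \<le> t * f y $ i + (1 - t) * f 0 $ i"
      using \<delta>_fy_le t by (intro add_left_mono mult_left_mono) (auto simp: cone_le_iff)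
    also have "\<dots> \<le> f x $ i"
      using concave_at_0 mono by (auto simp: cone_le_iff intro: order_trans)
    finally show "((t + (1 - t) * \<delta>) *\<^sub>R f y) $ i \<le> f x $ i" .
  qed
qed

lemma bounded_scaled_cone_le:
  fixes S :: "(real^'k) set"
  assumes "bounded S" "p \<in> pos_cone"
  obtains \<delta> where "0 < \<delta>" "\<delta> < 1" "\<And>z. z \<in> S \<Longrightarrow> cone_le (\<delta> *\<^sub>R z) p"
proof -
  obtain B where B: "B > 0" "\<And>z. z \<in> S \<Longrightarrow> norm z \<le> B"
    using assms(1) by (auto simp: bounded_pos)
  define m where "m = Min (range (\<lambda>i. p $ i))"
  have m_pos: "m > 0"
    using assms(2) by (simp add: m_def pos_cone_def)
  define \<delta> where "\<delta> = min (1 / 2) (m / B)"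
  have \<delta>: "0 < \<delta>" "\<delta> < 1"
    using m_pos B(1) by (auto simp: \<delta>_def)
  have "\<delta> * z $ i \<le> p $ i" if "z \<in> S" for z i
  proof -
    have "\<delta> * z $ i \<le> \<delta> * B"
      using \<delta> B(2)[OF that] component_le_norm_cart[of z i] by (intro mult_left_mono) auto
    also have "\<dots> \<le> m / B * B"
      using B(1) by (intro mult_right_mono) (auto simp: \<delta>_def)
    also have "\<dots> = m"
      using B(1) by simp
    also have "m \<le> p $ i"
      by (simp add: m_def)
    finally show ?thesis .
  qed
  with \<delta> show ?thesis
    using that by (simp add: cone_le_iff)
qed

lemma ln_convex_combination_with_one_ge:
  fixes t d :: real
  assumes "0 < t" "t \<le> 1" "0 \<le> d" "d \<le> 1"
  shows "(1 - d) * ln t \<le> ln (t + (1 - t) * d)"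
proof (cases "d = 0 \<or> d = 1")
  case False
  with assms have "(1 - d) * ln t + d * ln 1 \<le> ln ((1 - d) *\<^sub>R t + d *\<^sub>R 1)"
    by (intro concave_onD[OF ln_concave]) auto
  then show ?thesis
    by (simp add: algebra_simps)
qed auto

lemma cone_concave_thompson_contraction:
  assumes f_pos: "f ` nonneg_cone \<subseteq> pos_cone"
    and f_conc: "cone_concave_on nonneg_cone f"
    and x: "x \<in> pos_cone" and y: "y \<in> pos_cone"
    and \<delta>: "0 < \<delta>" "\<delta> < 1"
    and \<delta>_fx_le: "cone_le (\<delta> *\<^sub>R f x) (f 0)" and \<delta>_fy_le: "cone_le (\<delta> *\<^sub>R f y) (f 0)"
  shows "thompson_dist (f x) (f y) \<le> (1 - \<delta>) * thompson_dist x y"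
proof -
  have x_nonneg: "x \<in> nonneg_cone" and y_nonneg: "y \<in> nonneg_cone"
    and f_nonneg: "f ` nonneg_cone \<subseteq> nonneg_cone"
    using x y f_pos pos_cone_subset_nonneg_cone by blast+
  define t where "t = exp (- thompson_dist x y)"
  have t: "0 < t" "t \<le> 1"
    using thompson_dist_nonneg[OF x y] by (auto simp: t_def)
  have "cone_le (t *\<^sub>R x) y" "cone_le (t *\<^sub>R y) x"
    using cone_le_exp_neg_thompson_dist[OF x y] cone_le_exp_neg_thompson_dist[OF y x]
    by (simp_all add: t_def thompson_dist_commute)
  then have "cone_le ((t + (1 - t) * \<delta>) *\<^sub>R f x) (f y)"
    "cone_le ((t + (1 - t) * \<delta>) *\<^sub>R f y) (f x)"
    using cone_concave_lower_bound[OF f_nonneg f_conc] x_nonneg y_nonneg t \<delta>_fx_le \<delta>_fy_le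
    by auto
  moreover have "t + (1 - t) * \<delta> > 0"
    using t \<delta> by (simp add: add_pos_nonneg)
  moreover have "f x \<in> pos_cone" "f y \<in> pos_cone"
    using f_pos x_nonneg y_nonneg by blast+
  ultimately have "thompson_dist (f x) (f y) \<le> - ln (t + (1 - t) * \<delta>)"
    using thompson_dist_le_minus_ln by blast
  also have "\<dots> \<le> - ((1 - \<delta>) * ln t)"
    using ln_convex_combination_with_one_ge[OF t] \<delta> by simp
  also have "\<dots> = (1 - \<delta>) * thompson_dist x y"
    by (simp add: t_def)
  finally show ?thesis .
qed

theorem proposition1:
  fixes f :: "real^'k \<Rightarrow> real^'k" and U :: "(real^'k) set"
  assumes f_maps: "f ` nonneg_cone \<subseteq> pos_cone"
    and f_cont: "continuous_on nonneg_cone f"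
    and f_conc: "cone_concave_on nonneg_cone f"
    and U_sub: "U \<subseteq> pos_cone"
    and U_compact: "compact U"
    and U_open: "\<exists>V. open V \<and> V \<noteq> {} \<and> V \<subseteq> U"
  shows "\<exists>c::real. 0 \<le> c \<and> c < 1 \<and>
           (\<forall>x\<in>U. \<forall>y\<in>U. thompson_dist (f x) (f y) \<le> c * thompson_dist x y)"
proof -
  have U_nonneg: "U \<subseteq> nonneg_cone"
    using U_sub pos_cone_subset_nonneg_cone by blast
  have "bounded (f ` U)"
    using continuous_on_subset[OF f_cont U_nonneg] U_compact
    by (intro compact_imp_bounded compact_continuous_image)
  moreover have "f 0 \<in> pos_cone"
    using f_maps by (auto simp: nonneg_cone_def)
  ultimately obtain \<delta> where \<delta>: "0 < \<delta>" "\<delta> < 1"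
    and \<delta>_le: "\<And>y. y \<in> U \<Longrightarrow> cone_le (\<delta> *\<^sub>R f y) (f 0)"
    by (rule bounded_scaled_cone_le) blast
  have "thompson_dist (f x) (f y) \<le> (1 - \<delta>) * thompson_dist x y" if "x \<in> U" "y \<in> U" for x y
    using that U_sub \<delta> \<delta>_le by (intro cone_concave_thompson_contraction[OF f_maps f_conc]) auto
  with \<delta> show ?thesis
    by (intro exI[of _ "1 - \<delta>"]) auto
qed

end
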